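(* Fix $\theta\in\mathbb{R}^d$, a coarsening function $c:\mathcal{D}\to\mathcal{D}$, and $\ell\in[L]$. Let $(C,D)\sim\mathbb{G}$, $U\sim\mathbb{U}$, $\tilde D_1\sim\mathbb{P}_\theta(C)=\mathsf{T}(\theta,C)$ and $\tilde D_2\sim\mathbb{Q}_\theta(C)=\mathsf{S}(\theta,C)$, and assume $\tilde D_1,\tilde D_2,U$ are pairwise independent. Let $g:\mathcal{D}\times\mathcal{U}\to[0,1]$ be a minimizer, over all functions $f:\mathcal{D}\times\mathcal{U}\to[0,1]$, of $\sum_{i\in\{1,2\}}\mathbf{E}[\lvert f(c(\tilde D_i),U)-h_\ell(D,U)\rvert]$. Define $$\gamma=\sum_{i\in\{1,2\}}\mathbf{E}[\lvert h_\ell(c(\tilde D_i),U)-h_\ell(\tilde D_i,U)\rvert],\qquad \varphi=\sum_{i\in\{1,2\}}\mathbf{E}[\lvert g(c(\tilde D_i),U)-h_\ell(D,U)\rvert],$$ $$\delta=\mathbf{E}\Big[\sum_{x\in c(\mathcal{D})}\lvert g(x,U)-h_\ell(x,U)\rvert\Big].$$ Then $$\mathbf{TD}^\ell_{\mathsf{T}}(\theta)\le \gamma+\varphi+\mathbf{TD}^\ell_{\mathsf{S}}(\theta)+\sqrt{\varepsilon_c(\tilde D_1,\tilde D_2)\cdot\delta}.$$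
   Context: $\mathcal{C}$ is a set of dialogue contexts, $\mathcal{D}$ a set of dialogues, $\mathcal{U}$ an arbitrary set with a distribution $\mathbb{U}$ on it. $\mathbb{G}$ is a (goal) distribution on $\mathcal{C}\times\mathcal{D}$. Test functions $h_1,\dots,h_L:\mathcal{D}\times\mathcal{U}\to[0,1]$ are fixed. An environment $\mathsf{E}$ is a map $(\theta,c)\mapsto\mathbb{P}_\theta(c)$ assigning to parameters $\theta\in\mathbb{R}^d$ and context $c\in\mathcal{C}$ a distribution over $\mathcal{D}$; $\mathsf{S}$ and $\mathsf{T}$ are two environments. Test divergence: $\mathbf{TD}^\ell_{\mathsf{E}}(\theta)=\mathbf{E}[\lvert h_\ell(D,U)-h_\ell(\hat D,U)\rvert]$ where $(C,D)\sim\mathbb{G}$, $\hat D\sim\mathsf{E}(\theta,C)$, $U\sim\mathbb{U}$ independent. Coarsening function: a map $c:\mathcal{D}\to\mathcal{D}$ with $c(\mathcal{D})$ finite and $\lvert c(\mathcal{D})\rvert<\lvert\mathcal{D}\rvert$. Discrete energy distance: for independent $A,B$, $\varepsilon_{01}(A,B)=2\mathbf{E}[1\{A\neq B\}]-\mathbf{E}[1\{A\neq A'\}]-\mathbf{E}[1\{B\neq B'\}]$ with $A',B'$ independent copies of $A,B$; and $\varepsilon_c(A,B)=\varepsilon_{01}(c(A),c(B))$. *)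

theory Defs
  imports "HOL-Probability.Probability"
begin

definition environment :: "'c measure \<Rightarrow> 'd measure \<Rightarrow> ('p \<Rightarrow> 'c \<Rightarrow> 'd measure) \<Rightarrow> bool" where
  "environment MC MD E \<longleftrightarrow> (\<forall>\<theta>. E \<theta> \<in> MC \<rightarrow>\<^sub>M prob_algebra MD)"

definition coarsening :: "'d measure \<Rightarrow> ('d \<Rightarrow> 'd) \<Rightarrow> bool" where
  "coarsening MD c \<longleftrightarrow>
     c \<in> MD \<rightarrow>\<^sub>M MD \<and> c \<in> MD \<rightarrow>\<^sub>M count_space UNIV \<and>
     finite (c ` space MD) \<and>
     (infinite (space MD) \<or> card (c ` space MD) < card (space MD))"

(* E[F(D, Dhat, U)] where (C,D) ~ G, Dhat ~ P(C), U ~ UU independent *)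
definition expect_env :: "('c \<times> 'd) measure \<Rightarrow> ('c \<Rightarrow> 'd measure) \<Rightarrow> 'u measure
    \<Rightarrow> ('d \<Rightarrow> 'd \<Rightarrow> 'u \<Rightarrow> real) \<Rightarrow> real" where
  "expect_env G P UU F = (\<integral>cd. (\<integral>x. (\<integral>u. F (snd cd) x u \<partial>UU) \<partial>P (fst cd)) \<partial>G)"

definition TD :: "('c \<times> 'd) measure \<Rightarrow> 'u measure \<Rightarrow> ('d \<times> 'u \<Rightarrow> real)
    \<Rightarrow> ('p \<Rightarrow> 'c \<Rightarrow> 'd measure) \<Rightarrow> 'p \<Rightarrow> real" where
  "TD G UU hl E \<theta> = expect_env G (E \<theta>) UU (\<lambda>d x u. \<bar>hl (d, u) - hl (x, u)\<bar>)"

definition marginal :: "('c \<times> 'd) measure \<Rightarrow> ('c \<Rightarrow> 'd measure) \<Rightarrow> 'd measure" where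
  "marginal G P = G \<bind> (\<lambda>cd. P (fst cd))"

(* discrete energy distance of independent A ~ MA, B ~ MB (A', B' independent copies) *)
definition eps01 :: "'a measure \<Rightarrow> 'a measure \<Rightarrow> real" where
  "eps01 MA MB =
     2 * (\<integral>a. (\<integral>b. of_bool (a \<noteq> b) \<partial>MB) \<partial>MA)
     - (\<integral>a. (\<integral>a'. of_bool (a \<noteq> a') \<partial>MA) \<partial>MA)
     - (\<integral>b. (\<integral>b'. of_bool (b \<noteq> b') \<partial>MB) \<partial>MB)"

definition eps_c :: "('d \<Rightarrow> 'd) \<Rightarrow> 'd measure \<Rightarrow> 'd measure \<Rightarrow> real" where
  "eps_c c MA MB = eps01 (distr MA (count_space UNIV) c) (distr MB (count_space UNIV) c)"

end

theory Submission
  imports Defs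
begin

text \<open>Write D' for a sampled dialogue and A for the expected coarse error
E|g(c D', U) - h(c D', U)|. Pointwise
  |h(D) - h(D')| <= |h(c D') - h(D')| + |g(c D') - h(D)| + |g(c D') - h(c D')|,
so integrating in T bounds TD_T by the T-parts of gamma and phi plus A_T; the same three
terms, rearranged, bound |g(c D') - h(c D')|, and integrating in S gives
A_S <= (S-parts of gamma and phi) + TD_S. Finally A_T - A_S = sum_z K z (p z - q z), where
K z = E|g(z, U) - h(z, U)| lies in [0, 1] and p, q are the laws of c D'_1 and c D'_2. By
Cauchy-Schwarz and K^2 <= K this is at most sqrt (sum_z (p z - q z)^2 * sum_z K z), and the two
sums are exactly eps_c and delta.\<close>

lemma (in prob_space)
  fixes f :: "'a \<Rightarrow> real"
  assumes f: "f \<in> borel_measurable M" and bound: "\<And>x. x \<in> space M \<Longrightarrow> \<bar>f x\<bar> \<le> B"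
  shows integrable_bounded: "integrable M f"
    and abs_integral_le_bound: "\<bar>\<integral>x. f x \<partial>M\<bar> \<le> B"
proof -
  show int: "integrable M f"
    using bound by (intro integrable_const_bound[where B=B] AE_I2 f) auto
  have "\<bar>\<integral>x. f x \<partial>M\<bar> \<le> (\<integral>x. \<bar>f x\<bar> \<partial>M)"
    by (rule integral_abs_bound)
  also have "\<dots> \<le> B"
    using int bound by (intro integral_le_const) auto
  finally show "\<bar>\<integral>x. f x \<partial>M\<bar> \<le> B" .
qed

lemma (in prob_space) integral_in_unit_interval:
  fixes f :: "'a \<Rightarrow> real"
  assumes f: "f \<in> borel_measurable M" and unit: "\<And>x. x \<in> space M \<Longrightarrow> f x \<in> {0..1}"
  shows "(\<integral>x. f x \<partial>M) \<in> {0..1}"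
proof -
  have "\<bar>\<integral>x. f x \<partial>M\<bar> \<le> 1"
    using unit by (intro abs_integral_le_bound[OF f]) auto
  moreover have "0 \<le> (\<integral>x. f x \<partial>M)"
    using unit by (intro Bochner_Integration.integral_nonneg) auto
  ultimately show ?thesis
    by simp
qed

lemma integral_measurable_subprob_algebra2:
  fixes f :: "_ \<Rightarrow> _ \<Rightarrow> 'b::{banach, second_countable_topology}"
  assumes f: "(\<lambda>(x, y). f x y) \<in> borel_measurable (M \<Otimes>\<^sub>M N)"
    and L: "L \<in> M \<rightarrow>\<^sub>M subprob_algebra N"
  shows "(\<lambda>x. integral\<^sup>L (L x) (f x)) \<in> borel_measurable M"
proof -
  have "(\<lambda>x. distr (L x) (M \<Otimes>\<^sub>M N) (\<lambda>y. (x, y))) \<in> M \<rightarrow>\<^sub>M subprob_algebra (M \<Otimes>\<^sub>M N)"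
    by (rule measurable_distr2[OF _ L]) simp
  then have "(\<lambda>x. integral\<^sup>L (distr (L x) (M \<Otimes>\<^sub>M N) (\<lambda>y. (x, y))) (\<lambda>(x, y). f x y)) \<in> borel_measurable M"
    by (rule measurable_compose[OF _ integral_measurable_subprob_algebra[OF f]])
  then show ?thesis
  proof (rule measurable_cong[THEN iffD1, rotated])
    fix x assume x: "x \<in> space M"
    have "sets (L x) = sets N"
      using L x by (rule sets_kernel)
    with x have Pair_x: "(\<lambda>y. (x, y)) \<in> L x \<rightarrow>\<^sub>M M \<Otimes>\<^sub>M N"
      by (simp only: measurable_cong_sets[of "L x" N] measurable_Pair1')
    show "integral\<^sup>L (distr (L x) (M \<Otimes>\<^sub>M N) (\<lambda>y. (x, y))) (\<lambda>(x, y). f x y) = integral\<^sup>L (L x) (f x)"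
      using integral_distr[OF Pair_x f] by simp
  qed
qed

definition bounded_integrand :: "'d measure \<Rightarrow> 'u measure \<Rightarrow> ('d \<Rightarrow> 'd \<Rightarrow> 'u \<Rightarrow> real) \<Rightarrow> bool" where
  "bounded_integrand MD UU F \<longleftrightarrow>
     (\<lambda>((d, x), u). F d x u) \<in> borel_measurable ((MD \<Otimes>\<^sub>M MD) \<Otimes>\<^sub>M UU) \<and>
     (\<exists>B. \<forall>d\<in>space MD. \<forall>x\<in>space MD. \<forall>u\<in>space UU. \<bar>F d x u\<bar> \<le> B)"

lemma bounded_integrandE:
  assumes "bounded_integrand MD UU F"
  obtains B where "\<And>d x u. d \<in> space MD \<Longrightarrow> x \<in> space MD \<Longrightarrow> u \<in> space UU \<Longrightarrow> \<bar>F d x u\<bar> \<le> B"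
  using assms by (auto simp: bounded_integrand_def)

lemma bounded_integrand_add:
  assumes "bounded_integrand MD UU F1" "bounded_integrand MD UU F2"
  shows "bounded_integrand MD UU (\<lambda>d x u. F1 d x u + F2 d x u)"
proof -
  obtain B1 B2 where "\<forall>d\<in>space MD. \<forall>x\<in>space MD. \<forall>u\<in>space UU. \<bar>F1 d x u\<bar> \<le> B1"
      "\<forall>d\<in>space MD. \<forall>x\<in>space MD. \<forall>u\<in>space UU. \<bar>F2 d x u\<bar> \<le> B2"
    using assms by (auto simp: bounded_integrand_def)
  then have "\<forall>d\<in>space MD. \<forall>x\<in>space MD. \<forall>u\<in>space UU. \<bar>F1 d x u + F2 d x u\<bar> \<le> B1 + B2"
    by (smt (verit))
  with assms show ?thesis
    unfolding bounded_integrand_def by (auto simp: split_beta')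
qed

lemma bounded_integrand_abs_diff:
  fixes f1 f2 :: "'d \<times> 'u \<Rightarrow> real"
  assumes f1: "f1 \<in> borel_measurable (MD \<Otimes>\<^sub>M UU)" "\<And>z. z \<in> space (MD \<Otimes>\<^sub>M UU) \<Longrightarrow> f1 z \<in> {0..1}"
    and f2: "f2 \<in> borel_measurable (MD \<Otimes>\<^sub>M UU)" "\<And>z. z \<in> space (MD \<Otimes>\<^sub>M UU) \<Longrightarrow> f2 z \<in> {0..1}"
    and a1: "(\<lambda>((d, x), u). a1 d x u) \<in> (MD \<Otimes>\<^sub>M MD) \<Otimes>\<^sub>M UU \<rightarrow>\<^sub>M MD \<Otimes>\<^sub>M UU"
    and a2: "(\<lambda>((d, x), u). a2 d x u) \<in> (MD \<Otimes>\<^sub>M MD) \<Otimes>\<^sub>M UU \<rightarrow>\<^sub>M MD \<Otimes>\<^sub>M UU"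
  shows "bounded_integrand MD UU (\<lambda>d x u. \<bar>f1 (a1 d x u) - f2 (a2 d x u)\<bar>)"
  unfolding bounded_integrand_def
proof
  show "(\<lambda>((d, x), u). \<bar>f1 (a1 d x u) - f2 (a2 d x u)\<bar>) \<in> borel_measurable ((MD \<Otimes>\<^sub>M MD) \<Otimes>\<^sub>M UU)"
  proof (rule measurable_cong[THEN iffD1, rotated])
    show "(\<lambda>z. \<bar>f1 ((\<lambda>((d, x), u). a1 d x u) z) - f2 ((\<lambda>((d, x), u). a2 d x u) z)\<bar>)
        \<in> borel_measurable ((MD \<Otimes>\<^sub>M MD) \<Otimes>\<^sub>M UU)"
      by (intro borel_measurable_abs borel_measurable_diff measurable_compose[OF a1 f1(1)]
          measurable_compose[OF a2 f2(1)])
  qed (auto split: prod.splits)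
  have "\<bar>f1 (a1 d x u) - f2 (a2 d x u)\<bar> \<le> 1"
    if "d \<in> space MD" "x \<in> space MD" "u \<in> space UU" for d x u
  proof -
    have "((d, x), u) \<in> space ((MD \<Otimes>\<^sub>M MD) \<Otimes>\<^sub>M UU)"
      using that by (simp add: space_pair_measure)
    then have "f1 (a1 d x u) \<in> {0..1}" "f2 (a2 d x u) \<in> {0..1}"
      using measurable_space[OF a1] measurable_space[OF a2] f1(2) f2(2) by (metis case_prod_conv)+
    then show ?thesis by auto
  qed
  then show "\<exists>B. \<forall>d\<in>space MD. \<forall>x\<in>space MD. \<forall>u\<in>space UU. \<bar>\<bar>f1 (a1 d x u) - f2 (a2 d x u)\<bar>\<bar> \<le> B"
    by auto
qed

lemma measurable_integrand_arguments:
  shows "(\<lambda>((d, x), u). (d, u)) \<in> (MD \<Otimes>\<^sub>M MD) \<Otimes>\<^sub>M UU \<rightarrow>\<^sub>M MD \<Otimes>\<^sub>M UU"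
    and "(\<lambda>((d, x), u). (x, u)) \<in> (MD \<Otimes>\<^sub>M MD) \<Otimes>\<^sub>M UU \<rightarrow>\<^sub>M MD \<Otimes>\<^sub>M UU"
    and "c \<in> MD \<rightarrow>\<^sub>M MD \<Longrightarrow> (\<lambda>((d, x), u). (c x, u)) \<in> (MD \<Otimes>\<^sub>M MD) \<Otimes>\<^sub>M UU \<rightarrow>\<^sub>M MD \<Otimes>\<^sub>M UU"
proof -
  show "(\<lambda>((d, x), u). (d, u)) \<in> (MD \<Otimes>\<^sub>M MD) \<Otimes>\<^sub>M UU \<rightarrow>\<^sub>M MD \<Otimes>\<^sub>M UU"
    "(\<lambda>((d, x), u). (x, u)) \<in> (MD \<Otimes>\<^sub>M MD) \<Otimes>\<^sub>M UU \<rightarrow>\<^sub>M MD \<Otimes>\<^sub>M UU"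
    unfolding case_prod_beta'
    by (intro measurable_Pair measurable_compose[OF measurable_fst measurable_fst]
        measurable_compose[OF measurable_fst measurable_snd] measurable_snd)+
  show "(\<lambda>((d, x), u). (c x, u)) \<in> (MD \<Otimes>\<^sub>M MD) \<Otimes>\<^sub>M UU \<rightarrow>\<^sub>M MD \<Otimes>\<^sub>M UU"
    if "c \<in> MD \<rightarrow>\<^sub>M MD"
    unfolding case_prod_beta'
    by (intro measurable_Pair measurable_compose[OF measurable_compose[OF measurable_fst measurable_snd] that]
        measurable_snd)
qed

locale kernel_expectation =
  fixes MC :: "'c measure" and MD :: "'d measure" and G :: "('c \<times> 'd) measure"
    and UU :: "'u measure" and P :: "'c \<Rightarrow> 'd measure"
  assumes prob_space_G: "prob_space G" and sets_G: "sets G = sets (MC \<Otimes>\<^sub>M MD)"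
    and prob_space_UU: "prob_space UU"
    and kernel: "P \<in> MC \<rightarrow>\<^sub>M prob_algebra MD"
begin

lemma space_G: "space G = space MC \<times> space MD"
  using sets_eq_imp_space_eq[OF sets_G] by (simp add: space_pair_measure)

lemma
  assumes "c \<in> space MC"
  shows prob_space_kernel: "prob_space (P c)"
    and sets_kernel_eq: "sets (P c) = sets MD"
    and space_kernel_eq: "space (P c) = space MD"
proof -
  have "P c \<in> space (prob_algebra MD)"
    using measurable_space[OF kernel assms] .
  then show "prob_space (P c)" and sets_eq: "sets (P c) = sets MD"
    by (auto simp: space_prob_algebra)
  from sets_eq show "space (P c) = space MD"
    by (rule sets_eq_imp_space_eq)
qed

lemma measurable_kernel_fst: "(\<lambda>cd. P (fst cd)) \<in> G \<rightarrow>\<^sub>M subprob_algebra MD"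
  unfolding measurable_cong_sets[OF sets_G refl]
  by (rule measurable_compose[OF measurable_fst measurable_prob_algebraD[OF kernel]])

context
  fixes F :: "'d \<Rightarrow> 'd \<Rightarrow> 'u \<Rightarrow> real"
  assumes F: "bounded_integrand MD UU F"
begin

lemma measurable_inner_integral: "(\<lambda>(d, x). \<integral>u. F d x u \<partial>UU) \<in> borel_measurable (MD \<Otimes>\<^sub>M MD)"
proof -
  interpret UU: prob_space UU by (rule prob_space_UU)
  have "case_prod (\<lambda>(d, x) u. F d x u) \<in> borel_measurable ((MD \<Otimes>\<^sub>M MD) \<Otimes>\<^sub>M UU)"
    using F by (simp add: bounded_integrand_def)
  from UU.borel_measurable_lebesgue_integral[OF this]
  show ?thesis by (simp add: case_prod_unfold)
qed

lemma measurable_integrand_section: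
  assumes "d \<in> space MD" "x \<in> space MD"
  shows "F d x \<in> borel_measurable UU"
proof -
  have "(\<lambda>((d, x), u). F d x u) \<in> borel_measurable ((MD \<Otimes>\<^sub>M MD) \<Otimes>\<^sub>M UU)"
    using F by (simp add: bounded_integrand_def)
  from measurable_Pair2[OF this, of "(d, x)"] assms show ?thesis
    by (simp add: space_pair_measure)
qed

lemma integrable_integrand_section:
  assumes "d \<in> space MD" "x \<in> space MD"
  shows "integrable UU (F d x)"
proof -
  obtain B where B: "\<And>d x u. d \<in> space MD \<Longrightarrow> x \<in> space MD \<Longrightarrow> u \<in> space UU \<Longrightarrow> \<bar>F d x u\<bar> \<le> B"
    using bounded_integrandE[OF F] by blast
  show ?thesis
    by (rule prob_space.integrable_bounded[OF prob_space_UU measurable_integrand_section[OF assms] B[OF assms]])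
qed

lemma abs_inner_integral_le:
  assumes "\<And>d x u. d \<in> space MD \<Longrightarrow> x \<in> space MD \<Longrightarrow> u \<in> space UU \<Longrightarrow> \<bar>F d x u\<bar> \<le> B"
    and "d \<in> space MD" "x \<in> space MD"
  shows "\<bar>\<integral>u. F d x u \<partial>UU\<bar> \<le> B"
  by (rule prob_space.abs_integral_le_bound[OF prob_space_UU measurable_integrand_section[OF assms(2,3)]])
    (rule assms(1)[OF assms(2,3)])

lemma measurable_inner_integral_kernel:
  assumes "c \<in> space MC" "d \<in> space MD"
  shows "(\<lambda>x. \<integral>u. F d x u \<partial>UU) \<in> borel_measurable (P c)"
proof -
  have "(\<lambda>x. \<integral>u. F d x u \<partial>UU) \<in> borel_measurable MD"
    using measurable_Pair2[OF measurable_inner_integral assms(2)] by simp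
  then show ?thesis
    by (simp only: measurable_cong_sets[OF sets_kernel_eq[OF assms(1)] refl])
qed

lemma integrable_inner_integral:
  assumes "c \<in> space MC" "d \<in> space MD"
  shows "integrable (P c) (\<lambda>x. \<integral>u. F d x u \<partial>UU)"
proof -
  obtain B where B: "\<And>d x u. d \<in> space MD \<Longrightarrow> x \<in> space MD \<Longrightarrow> u \<in> space UU \<Longrightarrow> \<bar>F d x u\<bar> \<le> B"
    using bounded_integrandE[OF F] by blast
  show ?thesis
    using abs_inner_integral_le[OF B assms(2)] space_kernel_eq[OF assms(1)]
    by (intro prob_space.integrable_bounded[OF prob_space_kernel[OF assms(1)] measurable_inner_integral_kernel[OF assms]])
      auto
qed

lemma measurable_middle_integral:
  "(\<lambda>cd. \<integral>x. \<integral>u. F (snd cd) x u \<partial>UU \<partial>P (fst cd)) \<in> borel_measurable G"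
proof (rule integral_measurable_subprob_algebra2[OF _ measurable_kernel_fst])
  have "(\<lambda>(cd, x). (snd cd, x)) \<in> (MC \<Otimes>\<^sub>M MD) \<Otimes>\<^sub>M MD \<rightarrow>\<^sub>M MD \<Otimes>\<^sub>M MD"
    by (simp add: case_prod_beta' measurable_Pair measurable_compose[OF measurable_fst measurable_snd])
  from measurable_compose[OF this measurable_inner_integral]
  have "(\<lambda>(cd, x). \<integral>u. F (snd cd) x u \<partial>UU) \<in> borel_measurable ((MC \<Otimes>\<^sub>M MD) \<Otimes>\<^sub>M MD)"
    by (simp add: case_prod_beta')
  then show "(\<lambda>(cd, x). \<integral>u. F (snd cd) x u \<partial>UU) \<in> borel_measurable (G \<Otimes>\<^sub>M MD)"
    by (simp only: measurable_cong_sets[OF sets_pair_measure_cong[OF sets_G refl] refl])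
qed

lemma integrable_middle_integral:
  "integrable G (\<lambda>cd. \<integral>x. \<integral>u. F (snd cd) x u \<partial>UU \<partial>P (fst cd))"
proof -
  obtain B where B: "\<And>d x u. d \<in> space MD \<Longrightarrow> x \<in> space MD \<Longrightarrow> u \<in> space UU \<Longrightarrow> \<bar>F d x u\<bar> \<le> B"
    using bounded_integrandE[OF F] by blast
  have "\<bar>\<integral>x. \<integral>u. F d x u \<partial>UU \<partial>P c\<bar> \<le> B" if "c \<in> space MC" "d \<in> space MD" for c d
    using abs_inner_integral_le[OF B that(2)] space_kernel_eq[OF that(1)]
    by (intro prob_space.abs_integral_le_bound[OF prob_space_kernel[OF that(1)] measurable_inner_integral_kernel[OF that]])
      auto
  then show ?thesis
    by (intro prob_space.integrable_bounded[OF prob_space_G measurable_middle_integral]) (auto simp: space_G)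
qed

end

lemma expect_env_add:
  assumes F1: "bounded_integrand MD UU F1" and F2: "bounded_integrand MD UU F2"
  shows "expect_env G P UU (\<lambda>d x u. F1 d x u + F2 d x u)
    = expect_env G P UU F1 + expect_env G P UU F2"
proof -
  have inner: "(\<integral>x. \<integral>u. F1 d x u + F2 d x u \<partial>UU \<partial>P c)
      = (\<integral>x. \<integral>u. F1 d x u \<partial>UU \<partial>P c) + (\<integral>x. \<integral>u. F2 d x u \<partial>UU \<partial>P c)"
    if "c \<in> space MC" "d \<in> space MD" for c d
  proof -
    have "(\<integral>x. \<integral>u. F1 d x u + F2 d x u \<partial>UU \<partial>P c)
        = (\<integral>x. (\<integral>u. F1 d x u \<partial>UU) + (\<integral>u. F2 d x u \<partial>UU) \<partial>P c)"
      using integrable_integrand_section[OF F1 that(2)] integrable_integrand_section[OF F2 that(2)] space_kernel_eq[OF that(1)]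
      by (intro Bochner_Integration.integral_cong refl Bochner_Integration.integral_add) auto
    also have "\<dots> = (\<integral>x. \<integral>u. F1 d x u \<partial>UU \<partial>P c) + (\<integral>x. \<integral>u. F2 d x u \<partial>UU \<partial>P c)"
      by (rule Bochner_Integration.integral_add[OF integrable_inner_integral[OF F1 that] integrable_inner_integral[OF F2 that]])
    finally show ?thesis .
  qed
  have "expect_env G P UU (\<lambda>d x u. F1 d x u + F2 d x u)
      = (\<integral>cd. (\<integral>x. \<integral>u. F1 (snd cd) x u \<partial>UU \<partial>P (fst cd))
              + (\<integral>x. \<integral>u. F2 (snd cd) x u \<partial>UU \<partial>P (fst cd)) \<partial>G)"
    unfolding expect_env_def using inner by (intro Bochner_Integration.integral_cong) (auto simp: space_G)
  also have "\<dots> = expect_env G P UU F1 + expect_env G P UU F2"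
    unfolding expect_env_def by (rule Bochner_Integration.integral_add[OF integrable_middle_integral[OF F1] integrable_middle_integral[OF F2]])
  finally show ?thesis .
qed

lemma expect_env_mono:
  assumes F1: "bounded_integrand MD UU F1" and F2: "bounded_integrand MD UU F2"
    and le: "\<And>d x u. d \<in> space MD \<Longrightarrow> x \<in> space MD \<Longrightarrow> u \<in> space UU \<Longrightarrow> F1 d x u \<le> F2 d x u"
  shows "expect_env G P UU F1 \<le> expect_env G P UU F2"
  unfolding expect_env_def
proof (rule integral_mono[OF integrable_middle_integral[OF F1] integrable_middle_integral[OF F2]])
  fix cd assume "cd \<in> space G"
  then have c: "fst cd \<in> space MC" and d: "snd cd \<in> space MD"
    by (auto simp: space_G)
  show "(\<integral>x. \<integral>u. F1 (snd cd) x u \<partial>UU \<partial>P (fst cd)) \<le> (\<integral>x. \<integral>u. F2 (snd cd) x u \<partial>UU \<partial>P (fst cd))"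
    using integrable_integrand_section[OF F1 d] integrable_integrand_section[OF F2 d] le[OF d] space_kernel_eq[OF c]
    by (intro integral_mono integrable_inner_integral[OF F1 c d] integrable_inner_integral[OF F2 c d]) auto
qed

lemma expect_env_le_add3:
  assumes F: "bounded_integrand MD UU F"
    and F1: "bounded_integrand MD UU F1" and F2: "bounded_integrand MD UU F2"
    and F3: "bounded_integrand MD UU F3"
    and le: "\<And>d x u. d \<in> space MD \<Longrightarrow> x \<in> space MD \<Longrightarrow> u \<in> space UU
      \<Longrightarrow> F d x u \<le> F1 d x u + F2 d x u + F3 d x u"
  shows "expect_env G P UU F \<le> expect_env G P UU F1 + expect_env G P UU F2 + expect_env G P UU F3"
proof -
  have F12: "bounded_integrand MD UU (\<lambda>d x u. F1 d x u + F2 d x u)"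
    using F1 F2 by (rule bounded_integrand_add)
  have "expect_env G P UU F \<le> expect_env G P UU (\<lambda>d x u. F1 d x u + F2 d x u + F3 d x u)"
    using F bounded_integrand_add[OF F12 F3] le by (rule expect_env_mono)
  also have "\<dots> = expect_env G P UU F1 + expect_env G P UU F2 + expect_env G P UU F3"
    by (simp only: expect_env_add[OF F12 F3] expect_env_add[OF F1 F2])
  finally show ?thesis .
qed

lemma
  shows prob_space_marginal: "prob_space (marginal G P)"
    and sets_marginal: "sets (marginal G P) = sets MD"
proof -
  show "prob_space (marginal G P)"
    unfolding marginal_def
    by (intro prob_space.prob_space_bind[OF prob_space_G _ measurable_kernel_fst] AE_I2)
      (auto simp: space_G prob_space_kernel)
  show "sets (marginal G P) = sets MD"
    unfolding marginal_def
    by (rule sets_bind[OF _ prob_space.not_empty[OF prob_space_G]]) (auto simp: space_G sets_kernel_eq)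
qed

lemma expect_env_marginal:
  fixes f :: "'d \<Rightarrow> 'u \<Rightarrow> real"
  assumes f: "(\<lambda>(x, u). f x u) \<in> borel_measurable (MD \<Otimes>\<^sub>M UU)"
    and bound: "\<And>x u. x \<in> space MD \<Longrightarrow> u \<in> space UU \<Longrightarrow> \<bar>f x u\<bar> \<le> B"
  shows "expect_env G P UU (\<lambda>d x u. f x u) = (\<integral>x. \<integral>u. f x u \<partial>UU \<partial>marginal G P)"
proof -
  interpret UU: prob_space UU by (rule prob_space_UU)
  have meas: "(\<lambda>x. \<integral>u. f x u \<partial>UU) \<in> borel_measurable MD"
    using f by (rule UU.borel_measurable_lebesgue_integral)
  have bound_integral: "\<bar>\<integral>u. f x u \<partial>UU\<bar> \<le> B" if "x \<in> space MD" for x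
    using measurable_Pair2[OF f that] bound[OF that] by (intro UU.abs_integral_le_bound) simp_all
  have AE_space: "AE cd in G. emeasure (P (fst cd)) (space (P (fst cd))) \<le> ennreal 1"
    by (intro AE_I2) (auto simp: space_G prob_space.emeasure_space_1 prob_space_kernel)
  have "(\<integral>x. \<integral>u. f x u \<partial>UU \<partial>marginal G P) = (\<integral>cd. \<integral>x. \<integral>u. f x u \<partial>UU \<partial>P (fst cd) \<partial>G)"
    unfolding marginal_def
    using meas bound_integral measurable_kernel_fst prob_space.finite_measure[OF prob_space_G] AE_space
    by (rule integral_bind)
  then show ?thesis
    unfolding expect_env_def by simp
qed

end

lemma integral_coarsening:
  fixes \<phi> :: "'d \<Rightarrow> real"
  assumes M: "finite_measure M" and sets_M: "sets M = sets MD" and c: "coarsening MD c"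
  shows "(\<integral>x. \<phi> (c x) \<partial>M) = (\<Sum>z\<in>c ` space MD. \<phi> z * measure M (c -` {z} \<inter> space MD))"
proof -
  have fin: "finite (c ` space MD)" and c_meas: "c \<in> MD \<rightarrow>\<^sub>M count_space UNIV"
    using c by (auto simp: coarsening_def)
  have space_M: "space M = space MD"
    using sets_M by (rule sets_eq_imp_space_eq)
  have fibre: "c -` {z} \<inter> space MD \<in> sets M" for z
    using measurable_sets[OF c_meas, of "{z}"] sets_M by simp
  have "(\<integral>x. \<phi> (c x) \<partial>M) = (\<integral>x. (\<Sum>z\<in>c ` space MD. \<phi> z * indicator (c -` {z} \<inter> space MD) x) \<partial>M)"
  proof (rule Bochner_Integration.integral_cong[OF refl])
    fix x assume "x \<in> space M"
    then have "(\<Sum>z\<in>c ` space MD. \<phi> z * indicator (c -` {z} \<inter> space MD) x)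
        = (\<Sum>z\<in>c ` space MD. if z = c x then \<phi> z else 0)"
      by (intro sum.cong) (auto simp: space_M indicator_def)
    also have "\<dots> = \<phi> (c x)"
      using fin \<open>x \<in> space M\<close> by (simp add: space_M)
    finally show "\<phi> (c x) = (\<Sum>z\<in>c ` space MD. \<phi> z * indicator (c -` {z} \<inter> space MD) x)" ..
  qed
  also have "\<dots> = (\<Sum>z\<in>c ` space MD. \<phi> z * measure M (c -` {z} \<inter> space MD))"
    using fibre finite_measure.emeasure_finite[OF M]
    by (simp add: Bochner_Integration.integral_sum integrable_mult_right top.not_eq_extremum)
  finally show ?thesis .
qed

lemma sum_measure_coarsening_fibres:
  assumes "prob_space M" "sets M = sets MD" "coarsening MD c"
  shows "(\<Sum>z\<in>c ` space MD. measure M (c -` {z} \<inter> space MD)) = 1"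
  using integral_coarsening[OF prob_space.finite_measure[OF assms(1)] assms(2,3), of "\<lambda>_. 1"] assms(1)
  by (simp add: prob_space.prob_space)

lemma integral_distr_coarsening:
  fixes \<psi> :: "'d \<Rightarrow> real"
  assumes M: "finite_measure M" and sets_M: "sets M = sets MD" and c: "coarsening MD c"
  shows "(\<integral>a. \<psi> a \<partial>distr M (count_space UNIV) c)
    = (\<Sum>z\<in>c ` space MD. \<psi> z * measure M (c -` {z} \<inter> space MD))"
proof -
  have "c \<in> M \<rightarrow>\<^sub>M count_space UNIV"
    using c by (simp add: coarsening_def measurable_cong_sets[OF sets_M refl])
  then have "(\<integral>a. \<psi> a \<partial>distr M (count_space UNIV) c) = (\<integral>x. \<psi> (c x) \<partial>M)"
    by (rule integral_distr) simp
  also have "\<dots> = (\<Sum>z\<in>c ` space MD. \<psi> z * measure M (c -` {z} \<inter> space MD))"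
    by (rule integral_coarsening[OF M sets_M c])
  finally show ?thesis .
qed

lemma integral_coarsening_disagreement:
  assumes M: "prob_space M" "sets M = sets MD" and N: "prob_space N" "sets N = sets MD"
    and c: "coarsening MD c"
  shows "(\<integral>a. \<integral>b. of_bool (a \<noteq> b) \<partial>distr N (count_space UNIV) c \<partial>distr M (count_space UNIV) c)
    = (\<Sum>w\<in>c ` space MD. (1 - measure N (c -` {w} \<inter> space MD)) * measure M (c -` {w} \<inter> space MD))"
proof -
  define Z where "Z = c ` space MD"
  define q where "q z = measure N (c -` {z} \<inter> space MD)" for z
  have "finite Z" and "sum q Z = 1"
    using c sum_measure_coarsening_fibres[OF N c] by (simp_all add: coarsening_def Z_def q_def)
  have disagree: "(\<Sum>z\<in>Z. of_bool (w \<noteq> z) * q z) = 1 - q w" if "w \<in> Z" for w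
  proof -
    have "(\<Sum>z\<in>Z. of_bool (w \<noteq> z) * q z) = (\<Sum>z\<in>Z. q z - (if w = z then q z else 0))"
      by (rule sum.cong) auto
    also have "\<dots> = 1 - q w"
      using \<open>finite Z\<close> \<open>sum q Z = 1\<close> that by (simp add: sum_subtractf)
    finally show ?thesis .
  qed
  show ?thesis
    unfolding integral_distr_coarsening[OF prob_space.finite_measure[OF M(1)] M(2) c]
      integral_distr_coarsening[OF prob_space.finite_measure[OF N(1)] N(2) c] Z_def[symmetric] q_def[symmetric]
    using disagree by (intro sum.cong) simp_all
qed

lemma eps_c_eq_sum_squares:
  assumes M1: "prob_space M1" "sets M1 = sets MD" and M2: "prob_space M2" "sets M2 = sets MD"
    and c: "coarsening MD c"
  shows "eps_c c M1 M2 = (\<Sum>z\<in>c ` space MD.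
           (measure M1 (c -` {z} \<inter> space MD) - measure M2 (c -` {z} \<inter> space MD))\<^sup>2)"
proof -
  define Z where "Z = c ` space MD"
  define p where "p z = measure M1 (c -` {z} \<inter> space MD)" for z
  define q where "q z = measure M2 (c -` {z} \<inter> space MD)" for z
  have "eps_c c M1 M2
      = 2 * (\<Sum>w\<in>Z. (1 - q w) * p w) - (\<Sum>w\<in>Z. (1 - p w) * p w) - (\<Sum>w\<in>Z. (1 - q w) * q w)"
    unfolding eps_c_def eps01_def integral_coarsening_disagreement[OF M1 M2 c]
      integral_coarsening_disagreement[OF M1 M1 c] integral_coarsening_disagreement[OF M2 M2 c]
    by (simp only: Z_def p_def q_def)
  also have "\<dots> = (\<Sum>w\<in>Z. 2 * ((1 - q w) * p w) - (1 - p w) * p w - (1 - q w) * q w)"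
    by (simp add: sum_subtractf sum_distrib_left)
  also have "\<dots> = (\<Sum>w\<in>Z. (p w - q w)\<^sup>2 + (p w - q w))"
    by (rule sum.cong) (auto simp: power2_eq_square algebra_simps)
  also have "\<dots> = (\<Sum>w\<in>Z. (p w - q w)\<^sup>2)"
    using sum_measure_coarsening_fibres[OF M1 c] sum_measure_coarsening_fibres[OF M2 c]
    by (simp add: sum.distrib sum_subtractf Z_def p_def q_def)
  finally show ?thesis
    by (simp add: Z_def p_def q_def)
qed

lemma sum_weighted_diff_le_sqrt:
  fixes K p q :: "'a \<Rightarrow> real"
  assumes "finite Z" and K: "\<And>z. z \<in> Z \<Longrightarrow> K z \<in> {0..1}"
  shows "(\<Sum>z\<in>Z. K z * p z) - (\<Sum>z\<in>Z. K z * q z) \<le> sqrt ((\<Sum>z\<in>Z. (p z - q z)\<^sup>2) * (\<Sum>z\<in>Z. K z))"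
proof -
  have "((\<Sum>z\<in>Z. K z * p z) - (\<Sum>z\<in>Z. K z * q z))\<^sup>2 = (\<Sum>z\<in>Z. (p z - q z) * K z)\<^sup>2"
    by (simp add: sum_subtractf[symmetric] algebra_simps)
  also have "\<dots> \<le> (\<Sum>z\<in>Z. (p z - q z)\<^sup>2) * (\<Sum>z\<in>Z. (K z)\<^sup>2)"
    by (rule Cauchy_Schwarz_ineq_sum)
  also have "\<dots> \<le> (\<Sum>z\<in>Z. (p z - q z)\<^sup>2) * (\<Sum>z\<in>Z. K z)"
    using K by (intro mult_left_mono sum_mono sum_nonneg) (auto simp: power2_eq_square mult_left_le)
  finally show ?thesis
    by (rule real_le_rsqrt)
qed

lemma (in kernel_expectation) expect_env_coarse_eq_sum:
  fixes k :: "'d \<times> 'u \<Rightarrow> real"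
  assumes c: "coarsening MD c" and k: "k \<in> borel_measurable (MD \<Otimes>\<^sub>M UU)"
    and bound: "\<And>z. z \<in> space (MD \<Otimes>\<^sub>M UU) \<Longrightarrow> \<bar>k z\<bar> \<le> B"
  shows "expect_env G P UU (\<lambda>d x u. k (c x, u))
    = (\<Sum>z\<in>c ` space MD. (\<integral>u. k (z, u) \<partial>UU) * measure (marginal G P) (c -` {z} \<inter> space MD))"
proof -
  have c_meas: "c \<in> MD \<rightarrow>\<^sub>M MD"
    using c by (simp add: coarsening_def)
  have "(\<lambda>(x, u). k (c x, u)) \<in> borel_measurable (MD \<Otimes>\<^sub>M UU)"
    using measurable_compose[OF measurable_Pair[OF measurable_compose[OF measurable_fst c_meas] measurable_snd] k]
    by (simp add: case_prod_beta')
  then have "expect_env G P UU (\<lambda>d x u. k (c x, u)) = (\<integral>x. (\<integral>u. k (c x, u) \<partial>UU) \<partial>marginal G P)"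
    using bound measurable_space[OF c_meas] by (intro expect_env_marginal) (auto simp: space_pair_measure)
  also have "\<dots> = (\<Sum>z\<in>c ` space MD. (\<integral>u. k (z, u) \<partial>UU) * measure (marginal G P) (c -` {z} \<inter> space MD))"
    using prob_space_marginal sets_marginal
    by (intro integral_coarsening[OF prob_space.finite_measure _ c])
  finally show ?thesis .
qed

lemma expect_env_coarse_diff_le:
  fixes k :: "'d \<times> 'u \<Rightarrow> real"
  assumes P: "kernel_expectation MC MD G UU P" and Q: "kernel_expectation MC MD G UU Q"
    and c: "coarsening MD c"
    and k: "k \<in> borel_measurable (MD \<Otimes>\<^sub>M UU)" "\<And>z. z \<in> space (MD \<Otimes>\<^sub>M UU) \<Longrightarrow> k z \<in> {0..1}"
  shows "expect_env G P UU (\<lambda>d x u. k (c x, u)) - expect_env G Q UU (\<lambda>d x u. k (c x, u))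
    \<le> sqrt (eps_c c (marginal G P) (marginal G Q) * (\<integral>u. (\<Sum>z\<in>c ` space MD. k (z, u)) \<partial>UU))"
proof -
  interpret UU: prob_space UU
    using P by (rule kernel_expectation.prob_space_UU)
  define K where "K z = (\<integral>u. k (z, u) \<partial>UU)" for z
  have fin: "finite (c ` space MD)" and c_space: "\<And>x. x \<in> space MD \<Longrightarrow> c x \<in> space MD"
    using c measurable_space[of c MD MD] by (auto simp: coarsening_def)
  have k_section: "(\<lambda>u. k (z, u)) \<in> borel_measurable UU" "\<And>u. u \<in> space UU \<Longrightarrow> k (z, u) \<in> {0..1}"
    if "z \<in> space MD" for z
    using measurable_Pair2[OF k(1) that] k(2) that by (auto simp: space_pair_measure)
  have K_unit: "K z \<in> {0..1}" if "z \<in> space MD" for z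
    unfolding K_def by (rule UU.integral_in_unit_interval[OF k_section[OF that]])
  have k_abs: "\<bar>k z\<bar> \<le> 1" if "z \<in> space (MD \<Otimes>\<^sub>M UU)" for z
    using k(2)[OF that] by auto
  have delta: "(\<integral>u. (\<Sum>z\<in>c ` space MD. k (z, u)) \<partial>UU) = (\<Sum>z\<in>c ` space MD. K z)"
    unfolding K_def using k_section c_space
    by (intro Bochner_Integration.integral_sum UU.integrable_bounded[of _ 1]) auto
  have "expect_env G P UU (\<lambda>d x u. k (c x, u)) - expect_env G Q UU (\<lambda>d x u. k (c x, u))
      = (\<Sum>z\<in>c ` space MD. K z * measure (marginal G P) (c -` {z} \<inter> space MD))
        - (\<Sum>z\<in>c ` space MD. K z * measure (marginal G Q) (c -` {z} \<inter> space MD))"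
    unfolding K_def
    by (simp only: kernel_expectation.expect_env_coarse_eq_sum[OF P c k(1) k_abs]
        kernel_expectation.expect_env_coarse_eq_sum[OF Q c k(1) k_abs])
  also have "\<dots> \<le> sqrt ((\<Sum>z\<in>c ` space MD.
      (measure (marginal G P) (c -` {z} \<inter> space MD) - measure (marginal G Q) (c -` {z} \<inter> space MD))\<^sup>2)
      * (\<Sum>z\<in>c ` space MD. K z))"
    using K_unit fin c_space by (intro sum_weighted_diff_le_sqrt) auto
  finally show ?thesis
    unfolding delta eps_c_eq_sum_squares[OF kernel_expectation.prob_space_marginal[OF P]
      kernel_expectation.sets_marginal[OF P] kernel_expectation.prob_space_marginal[OF Q]
      kernel_expectation.sets_marginal[OF Q] c] .
qed

theorem theorem1:
  fixes MC :: "'c measure" and MD :: "'d measure" and G :: "('c \<times> 'd) measure"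
    and UU :: "'u measure" and L :: nat and h :: "nat \<Rightarrow> 'd \<times> 'u \<Rightarrow> real"
    and T S :: "real ^ 'n \<Rightarrow> 'c \<Rightarrow> 'd measure" and \<theta> :: "real ^ 'n"
    and c :: "'d \<Rightarrow> 'd" and l :: nat and g :: "'d \<times> 'u \<Rightarrow> real"
  assumes G: "prob_space G" "sets G = sets (MC \<Otimes>\<^sub>M MD)"
    and UU: "prob_space UU"
    and h: "\<forall>k\<in>{1..L}. h k \<in> borel_measurable (MD \<Otimes>\<^sub>M UU) \<and>
              (\<forall>z\<in>space (MD \<Otimes>\<^sub>M UU). 0 \<le> h k z \<and> h k z \<le> 1)"
    and envT: "environment MC MD T" and envS: "environment MC MD S"
    and c: "coarsening MD c"
    and l: "l \<in> {1..L}"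
    and g_meas: "g \<in> borel_measurable (MD \<Otimes>\<^sub>M UU)"
    and g_range: "\<forall>z\<in>space (MD \<Otimes>\<^sub>M UU). 0 \<le> g z \<and> g z \<le> 1"
    and g_min: "\<forall>f \<in> borel_measurable (MD \<Otimes>\<^sub>M UU).
                  (\<forall>z\<in>space (MD \<Otimes>\<^sub>M UU). 0 \<le> f z \<and> f z \<le> 1) \<longrightarrow>
                  expect_env G (T \<theta>) UU (\<lambda>d x u. \<bar>g (c x, u) - h l (d, u)\<bar>)
                  + expect_env G (S \<theta>) UU (\<lambda>d x u. \<bar>g (c x, u) - h l (d, u)\<bar>)
                  \<le> expect_env G (T \<theta>) UU (\<lambda>d x u. \<bar>f (c x, u) - h l (d, u)\<bar>)
                  + expect_env G (S \<theta>) UU (\<lambda>d x u. \<bar>f (c x, u) - h l (d, u)\<bar>)"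
  shows "TD G UU (h l) T \<theta> \<le>
           (expect_env G (T \<theta>) UU (\<lambda>d x u. \<bar>h l (c x, u) - h l (x, u)\<bar>)
            + expect_env G (S \<theta>) UU (\<lambda>d x u. \<bar>h l (c x, u) - h l (x, u)\<bar>))
         + (expect_env G (T \<theta>) UU (\<lambda>d x u. \<bar>g (c x, u) - h l (d, u)\<bar>)
            + expect_env G (S \<theta>) UU (\<lambda>d x u. \<bar>g (c x, u) - h l (d, u)\<bar>))
         + TD G UU (h l) S \<theta>
         + sqrt (eps_c c (marginal G (T \<theta>)) (marginal G (S \<theta>))
                 * (\<integral>u. (\<Sum>x\<in>c ` space MD. \<bar>g (x, u) - h l (x, u)\<bar>) \<partial>UU))"
proof -
  have h_l: "h l \<in> borel_measurable (MD \<Otimes>\<^sub>M UU)" "\<And>z. z \<in> space (MD \<Otimes>\<^sub>M UU) \<Longrightarrow> h l z \<in> {0..1}"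
    using h l by auto
  have g: "g \<in> borel_measurable (MD \<Otimes>\<^sub>M UU)" "\<And>z. z \<in> space (MD \<Otimes>\<^sub>M UU) \<Longrightarrow> g z \<in> {0..1}"
    using g_meas g_range by auto
  interpret T: kernel_expectation MC MD G UU "T \<theta>"
    using envT unfolding environment_def by (intro kernel_expectation.intro G UU) blast
  interpret S: kernel_expectation MC MD G UU "S \<theta>"
    using envS unfolding environment_def by (intro kernel_expectation.intro G UU) blast
  have c_meas: "c \<in> MD \<rightarrow>\<^sub>M MD"
    using c by (simp add: coarsening_def)
  note args = measurable_integrand_arguments(1,2) measurable_integrand_arguments(3)[OF c_meas]
  have TD: "bounded_integrand MD UU (\<lambda>d x u. \<bar>h l (d, u) - h l (x, u)\<bar>)"
    and gamma: "bounded_integrand MD UU (\<lambda>d x u. \<bar>h l (c x, u) - h l (x, u)\<bar>)"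
    and phi: "bounded_integrand MD UU (\<lambda>d x u. \<bar>g (c x, u) - h l (d, u)\<bar>)"
    and coarse: "bounded_integrand MD UU (\<lambda>d x u. \<bar>g (c x, u) - h l (c x, u)\<bar>)"
    using args by (auto intro!: bounded_integrand_abs_diff h_l g)
  let ?eT = "expect_env G (T \<theta>) UU" and ?eS = "expect_env G (S \<theta>) UU"
  let ?A = "\<lambda>d x u. \<bar>g (c x, u) - h l (c x, u)\<bar>"
  have "TD G UU (h l) T \<theta> \<le> ?eT (\<lambda>d x u. \<bar>h l (c x, u) - h l (x, u)\<bar>)
      + ?eT (\<lambda>d x u. \<bar>g (c x, u) - h l (d, u)\<bar>) + ?eT ?A"
    unfolding TD_def by (rule T.expect_env_le_add3[OF TD gamma phi coarse]) arith
  moreover have "?eS ?A \<le> ?eS (\<lambda>d x u. \<bar>h l (c x, u) - h l (x, u)\<bar>)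
      + ?eS (\<lambda>d x u. \<bar>g (c x, u) - h l (d, u)\<bar>) + TD G UU (h l) S \<theta>"
    unfolding TD_def by (rule S.expect_env_le_add3[OF coarse gamma phi TD]) arith
  moreover have "?eT ?A - ?eS ?A \<le> sqrt (eps_c c (marginal G (T \<theta>)) (marginal G (S \<theta>))
      * (\<integral>u. (\<Sum>x\<in>c ` space MD. \<bar>g (x, u) - h l (x, u)\<bar>) \<partial>UU))"
  proof (rule expect_env_coarse_diff_le[OF T.kernel_expectation_axioms S.kernel_expectation_axioms c])
    show "(\<lambda>z. \<bar>g z - h l z\<bar>) \<in> borel_measurable (MD \<Otimes>\<^sub>M UU)"
      using g(1) h_l(1) by (intro borel_measurable_abs borel_measurable_diff)
    show "\<bar>g z - h l z\<bar> \<in> {0..1}" if "z \<in> space (MD \<Otimes>\<^sub>M UU)" for z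
      using g(2)[OF that] h_l(2)[OF that] by (auto simp: abs_le_iff)
  qed
  ultimately show ?thesis
    by linarith
qed

end
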